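(* Let $H=(V,E)$ be a hypergraph whose vertex set $V$ is a partition of $[n]$ into sets of cardinality at least $2$, and suppose $H$ is downward-closed (for every $e\in E$ and every $e'\subseteq e$ with $|e'|>1$, $e'\in E$). Let $D=\{\bar i_I\}_{I\in V}$ with $\bar i_I\in I$ for each $I\in V$. Then the coordinate projection $\operatorname{proj}_{\mathcal{J}^H_\le(D)}$, restricted to $\mathrm{MC}^H$, is a bijection from $\mathrm{MC}^H$ onto $\mathrm{MC}^H_\le(D)$.
   Context: Let $n$ be a positive integer, $[n]=\{1,\dots,n\}$. A hypergraph $H=(V,E)$ here has as vertex set $V$ a family of pairwise disjoint subsets of $[n]$, each of cardinality at least $2$, and hyperedge set $E$ consisting of subsets $e\subseteq V$ with $|e|\ge 2$. Write $L(V)=\{\{I\}: I\in V\}$. For a nonempty $e\subseteq V$, $\mathcal{J}^e$ denotes the family of sets $J\subseteq \bigcup_{I\in e} I$ with $|J\cap I|=1$ for every $I\in e$. Let $\mathcal{J}^H=\bigcup_{e\in L(V)\cup E}\mathcal{J}^e$. For a vector $w$ indexed by sets, write $w_i=w_{\{i\}}$ and $w(A)=\sum_{i\in A}w_i$. Let $\mathscr{S}^H=\{w\in\{0,1\}^{\mathcal{J}^H}: w(I)=1\ \forall I\in V;\ w_J=\prod_{i\in J}w_i\ \forall J\in\mathcal{J}^H, |J|>1\}$ and $\mathrm{MC}^H=\operatorname{conv}\mathscr{S}^H$. For $D$ as in the claim, $\mathcal{J}^H_\le(D)=\{J\in\mathcal{J}^H: J\subseteq[n]\setminus D\}$ and $\mathrm{MC}^H_\le(D)=\operatorname{conv}\{v\in\{0,1\}^{\mathcal{J}^H_\le(D)}: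 v(I\setminus D)\le 1\ \forall I\in V;\ v_J=\prod_{i\in J}v_i\ \forall J\in\mathcal{J}^H_\le(D), |J|>1\}$. *)

theory Defs
  imports Complex_Main
begin

text \<open>Vectors indexed by sets of naturals are functions nat set => real; a vector in
  R^X is represented by a function vanishing outside X.\<close>

definition conv_hull :: "('a \<Rightarrow> real) set \<Rightarrow> ('a \<Rightarrow> real) set" where
  "conv_hull S = {x. \<exists>(k::nat) c p. (\<forall>i<k. p i \<in> S \<and> c i \<ge> 0) \<and> (\<Sum>i<k. c i) = 1
                      \<and> x = (\<lambda>J. \<Sum>i<k. c i * p i J)}"

definition hg_vertices_partition :: "nat \<Rightarrow> nat set set \<Rightarrow> bool" where
  "hg_vertices_partition n V \<longleftrightarrow>
     (\<forall>I\<in>V. I \<subseteq> {1..n} \<and> card I \<ge> 2)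
     \<and> (\<forall>I\<in>V. \<forall>I'\<in>V. I \<noteq> I' \<longrightarrow> I \<inter> I' = {})
     \<and> \<Union>V = {1..n}"

definition hg_edges :: "nat set set \<Rightarrow> nat set set set \<Rightarrow> bool" where
  "hg_edges V E \<longleftrightarrow> (\<forall>e\<in>E. e \<subseteq> V \<and> card e \<ge> 2)"

definition downward_closed :: "nat set set set \<Rightarrow> bool" where
  "downward_closed E \<longleftrightarrow> (\<forall>e\<in>E. \<forall>e'. e' \<subseteq> e \<and> card e' > 1 \<longrightarrow> e' \<in> E)"

definition LV :: "nat set set \<Rightarrow> nat set set set" where
  "LV V = {{I} | I. I \<in> V}"

definition Jfam :: "nat set set \<Rightarrow> nat set set" where
  "Jfam e = {J. J \<subseteq> \<Union>e \<and> (\<forall>I\<in>e. card (J \<inter> I) = 1)}"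

definition JH :: "nat set set \<Rightarrow> nat set set set \<Rightarrow> nat set set" where
  "JH V E = (\<Union>e\<in>LV V \<union> E. Jfam e)"

definition wsum :: "(nat set \<Rightarrow> real) \<Rightarrow> nat set \<Rightarrow> real" where
  "wsum w A = (\<Sum>i\<in>A. w {i})"

definition SH :: "nat set set \<Rightarrow> nat set set set \<Rightarrow> (nat set \<Rightarrow> real) set" where
  "SH V E = {w. (\<forall>J. J \<notin> JH V E \<longrightarrow> w J = 0)
               \<and> (\<forall>J\<in>JH V E. w J \<in> {0,1})
               \<and> (\<forall>I\<in>V. wsum w I = 1)
               \<and> (\<forall>J\<in>JH V E. card J > 1 \<longrightarrow> w J = (\<Prod>i\<in>J. w {i}))}"

definition MC :: "nat set set \<Rightarrow> nat set set set \<Rightarrow> (nat set \<Rightarrow> real) set" where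
  "MC V E = conv_hull (SH V E)"

definition JH_le :: "nat \<Rightarrow> nat set set \<Rightarrow> nat set set set \<Rightarrow> nat set \<Rightarrow> nat set set" where
  "JH_le n V E D = {J\<in>JH V E. J \<subseteq> {1..n} - D}"

definition SH_le :: "nat \<Rightarrow> nat set set \<Rightarrow> nat set set set \<Rightarrow> nat set \<Rightarrow> (nat set \<Rightarrow> real) set" where
  "SH_le n V E D = {v. (\<forall>J. J \<notin> JH_le n V E D \<longrightarrow> v J = 0)
               \<and> (\<forall>J\<in>JH_le n V E D. v J \<in> {0,1})
               \<and> (\<forall>I\<in>V. wsum v (I - D) \<le> 1)
               \<and> (\<forall>J\<in>JH_le n V E D. card J > 1 \<longrightarrow> v J = (\<Prod>i\<in>J. v {i}))}"

definition MC_le :: "nat \<Rightarrow> nat set set \<Rightarrow> nat set set set \<Rightarrow> nat set \<Rightarrow> (nat set \<Rightarrow> real) set" where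
  "MC_le n V E D = conv_hull (SH_le n V E D)"

definition proj :: "nat set set \<Rightarrow> (nat set \<Rightarrow> real) \<Rightarrow> (nat set \<Rightarrow> real)" where
  "proj X w = (\<lambda>J. if J \<in> X then w J else 0)"

end

theory Submission imports Defs begin

text \<open>The points of \<open>SH V E\<close> are the indicator vectors, restricted to \<open>JH V E\<close>, of the
  transversals of \<open>V\<close>, and the points of \<open>SH_le n V E D\<close> are those of the partial transversals
  of the sets \<open>I - D\<close>. Projection only remembers \<open>C - D\<close> of a transversal \<open>C\<close>, and a partial
  transversal avoiding \<open>D = d ` V\<close> is completed by the representatives \<open>d I\<close> of the parts it
  misses; since projection commutes with convex hulls, \<open>proj\<close> maps \<open>MC V E\<close> onto
  \<open>MC_le n V E D\<close>.

  For injectivity, every \<open>x \<in> MC V E\<close> satisfies the equations \<open>\<Sum>i\<in>I. x {i} = 1\<close> and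
  \<open>\<Sum>i\<in>I. x (insert i J) = x J\<close>, which hold on \<open>SH V E\<close>. If \<open>d I \<in> J\<close>, downward closure
  puts \<open>J - {d I}\<close> and every \<open>insert i (J - {d I})\<close> into \<open>JH V E\<close>, so these equations express
  \<open>x J\<close> through coordinates containing fewer representatives. Induction on \<open>card (J \<inter> D)\<close>
  shows that \<open>x\<close> is determined by its coordinates avoiding \<open>D\<close>.\<close>

definition subset_indicator :: "'a set set \<Rightarrow> 'a set \<Rightarrow> 'a set \<Rightarrow> real" where
  "subset_indicator \<J> C = (\<lambda>J. if J \<in> \<J> \<and> J \<subseteq> C then 1 else 0)"

definition transversals :: "'a set set \<Rightarrow> 'a set set" where
  "transversals V = {C. \<forall>I\<in>V. card (I \<inter> C) = 1}"

definition partial_transversals :: "'a set set \<Rightarrow> 'a set set" where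
  "partial_transversals V = {T. \<forall>I\<in>V. card (I \<inter> T) \<le> 1}"

lemma prod_binary_eq:
  fixes f :: "'a \<Rightarrow> real"
  assumes "finite J" "\<forall>j\<in>J. f j \<in> {0, 1}"
  shows "(\<Prod>j\<in>J. f j) = (if \<forall>j\<in>J. f j = 1 then 1 else 0)"
  using assms by (auto intro!: prod.neutral)

lemma subset_indicator_multiplicative:
  assumes "J \<in> \<J>" "finite J" "\<And>j. j \<in> J \<Longrightarrow> {j} \<in> \<J>"
  shows "subset_indicator \<J> C J = (\<Prod>j\<in>J. subset_indicator \<J> C {j})"
  using assms by (subst prod_binary_eq) (auto simp: subset_indicator_def)

lemma wsum_subset_indicator:
  assumes "finite A" "\<And>i. i \<in> A \<Longrightarrow> {i} \<in> \<J>"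
  shows "wsum (subset_indicator \<J> C) A = card (A \<inter> C)"
proof -
  have "wsum (subset_indicator \<J> C) A = (\<Sum>i\<in>A. if i \<in> C then 1 else 0)"
    unfolding wsum_def subset_indicator_def using assms(2) by (intro sum.cong) auto
  also have "\<dots> = card (A \<inter> C)"
    using assms(1) by (simp add: sum.If_cases Int_def)
  finally show ?thesis .
qed

lemma binary_multiplicative_eq_subset_indicator:
  assumes outside: "\<And>J. J \<notin> \<J> \<Longrightarrow> w J = 0"
    and binary: "\<And>J. J \<in> \<J> \<Longrightarrow> w J \<in> {0, 1}"
    and multiplicative: "\<And>J. J \<in> \<J> \<Longrightarrow> 1 < card J \<Longrightarrow> w J = (\<Prod>j\<in>J. w {j})"
    and finite_nonempty: "\<And>J. J \<in> \<J> \<Longrightarrow> finite J \<and> J \<noteq> {}"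
    and singletons: "\<And>J j. J \<in> \<J> \<Longrightarrow> j \<in> J \<Longrightarrow> {j} \<in> \<J>"
  shows "w = subset_indicator \<J> {i. w {i} = 1}"
proof
  fix J
  show "w J = subset_indicator \<J> {i. w {i} = 1} J"
  proof (cases "J \<in> \<J>")
    case False
    then show ?thesis using outside by (simp add: subset_indicator_def)
  next
    case True
    have "w J = (\<Prod>j\<in>J. w {j})"
    proof (cases "1 < card J")
      case False
      moreover have "card J \<noteq> 0"
        using finite_nonempty[OF True] by simp
      ultimately have "card J = 1" by linarith
      then obtain j where "J = {j}" by (rule card_1_singletonE)
      then show ?thesis by simp
    qed (use True multiplicative in auto)
    also have "\<dots> = (if J \<subseteq> {i. w {i} = 1} then 1 else 0)"
      using True binary finite_nonempty singletons by (subst prod_binary_eq) auto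
    finally show ?thesis using True by (simp add: subset_indicator_def)
  qed
qed

lemma proj_subset_indicator:
  "X \<subseteq> \<J> \<Longrightarrow> proj X (subset_indicator \<J> C) = subset_indicator X C"
  by (auto simp: proj_def subset_indicator_def fun_eq_iff)

lemma conv_hull_sum_eq:
  assumes "x \<in> conv_hull S"
    and "\<And>p. p \<in> S \<Longrightarrow> (\<Sum>k\<in>F. p (g k)) = (\<Sum>k\<in>G. p (h k)) + c"
  shows "(\<Sum>k\<in>F. x (g k)) = (\<Sum>k\<in>G. x (h k)) + c"
proof -
  obtain m :: nat and a p where p: "\<forall>i<m. p i \<in> S \<and> a i \<ge> 0" "(\<Sum>i<m. a i) = 1"
    and x: "x = (\<lambda>J. \<Sum>i<m. a i * p i J)"
    using assms(1) unfolding conv_hull_def by blast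
  have "(\<Sum>k\<in>F. x (g k)) = (\<Sum>i<m. a i * (\<Sum>k\<in>F. p i (g k)))"
    by (simp add: x sum_distrib_left sum.swap[of _ F])
  also have "\<dots> = (\<Sum>i<m. a i * ((\<Sum>k\<in>G. p i (h k)) + c))"
    using p(1) assms(2) by (intro sum.cong) auto
  also have "\<dots> = (\<Sum>i<m. a i * (\<Sum>k\<in>G. p i (h k))) + (\<Sum>i<m. a i) * c"
    by (simp add: distrib_left sum.distrib sum_distrib_right)
  also have "\<dots> = (\<Sum>k\<in>G. x (h k)) + c"
    by (simp add: p(2) x sum_distrib_left sum.swap[of _ G])
  finally show ?thesis .
qed

lemma proj_conv_hull: "proj X ` conv_hull S = conv_hull (proj X ` S)"
proof (intro equalityI subsetI)
  fix y
  assume "y \<in> proj X ` conv_hull S"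
  then obtain m :: nat and a p where p: "\<forall>i<m. p i \<in> S \<and> a i \<ge> 0" "(\<Sum>i<m. a i) = 1"
    and y: "y = proj X (\<lambda>J. \<Sum>i<m. a i * p i J)"
    unfolding conv_hull_def by blast
  have "y = (\<lambda>J. \<Sum>i<m. a i * proj X (p i) J)"
    by (auto simp: y proj_def)
  with p show "y \<in> conv_hull (proj X ` S)"
    unfolding conv_hull_def by (intro CollectI exI[of _ m] exI[of _ a] exI[of _ "\<lambda>i. proj X (p i)"]) auto
next
  fix y
  assume "y \<in> conv_hull (proj X ` S)"
  then obtain m :: nat and a q where q: "\<forall>i<m. q i \<in> proj X ` S \<and> a i \<ge> 0" "(\<Sum>i<m. a i) = 1"
    and y: "y = (\<lambda>J. \<Sum>i<m. a i * q i J)"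
    unfolding conv_hull_def by blast
  then have "\<forall>i\<in>{..<m}. \<exists>s. s \<in> S \<and> q i = proj X s" by blast
  from bchoice[OF this] obtain p where p: "\<forall>i\<in>{..<m}. p i \<in> S \<and> q i = proj X (p i)"
    by blast
  have "y = proj X (\<lambda>J. \<Sum>i<m. a i * p i J)"
    using p by (auto simp: y proj_def)
  moreover have "(\<lambda>J. \<Sum>i<m. a i * p i J) \<in> conv_hull S"
    unfolding conv_hull_def using p q(1,2) by (intro CollectI exI[of _ m] exI[of _ a]) auto
  ultimately show "y \<in> proj X ` conv_hull S" by blast
qed

locale partitioned_hypergraph =
  fixes n :: nat and V :: "nat set set" and E :: "nat set set set"
  assumes partition: "hg_vertices_partition n V" and edges: "hg_edges V E"
begin

lemma vertex_subset: "I \<in> V \<Longrightarrow> I \<subseteq> {1..n}"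
  using partition unfolding hg_vertices_partition_def by auto

lemma finite_vertex: "I \<in> V \<Longrightarrow> finite I"
  using vertex_subset finite_subset by blast

lemma vertex_eqI: "I \<in> V \<Longrightarrow> I' \<in> V \<Longrightarrow> i \<in> I \<Longrightarrow> i \<in> I' \<Longrightarrow> I = I'"
  using partition unfolding hg_vertices_partition_def by blast

lemma vertex_cover: "i \<in> {1..n} \<Longrightarrow> \<exists>I\<in>V. i \<in> I"
  using partition unfolding hg_vertices_partition_def by blast

lemma representatives_partial_transversal:
  assumes "\<forall>I\<in>V. d I \<in> I"
  shows "d ` V \<in> partial_transversals V"
proof -
  have "I \<inter> d ` V = {d I}" if "I \<in> V" for I
    using assms vertex_eqI[OF that] that by blast
  then show ?thesis
    unfolding partial_transversals_def by simp
qed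

lemma singleton_in_JH:
  assumes "i \<in> {1..n}"
  shows "{i} \<in> JH V E"
proof -
  obtain I where "I \<in> V" "i \<in> I"
    using vertex_cover[OF assms] by blast
  then have "{I} \<in> LV V" "{i} \<in> Jfam {I}"
    unfolding LV_def Jfam_def by auto
  then show ?thesis
    unfolding JH_def by blast
qed

lemma singleton_in_JH_le: "i \<in> {1..n} - D \<Longrightarrow> {i} \<in> JH_le n V E D"
  using singleton_in_JH unfolding JH_le_def by auto

lemma vertex_singleton_in_JH: "I \<in> V \<Longrightarrow> i \<in> I \<Longrightarrow> {i} \<in> JH V E"
  using singleton_in_JH vertex_subset by blast

lemma vertex_singleton_in_JH_le: "I \<in> V \<Longrightarrow> i \<in> I - D \<Longrightarrow> {i} \<in> JH_le n V E D"
  using singleton_in_JH_le vertex_subset by blast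

lemma JH_cases:
  assumes "J \<in> JH V E"
  obtains i where "i \<in> {1..n}" "J = {i}" | e where "e \<in> E" "J \<in> Jfam e"
proof -
  obtain e where e: "e \<in> LV V \<union> E" "J \<in> Jfam e"
    using assms unfolding JH_def by blast
  show ?thesis
  proof (cases "e \<in> E")
    case False
    then obtain I where I: "I \<in> V" "e = {I}"
      using e(1) unfolding LV_def by blast
    then have "J \<subseteq> I" "card J = 1"
      using e(2) unfolding Jfam_def by (auto simp: Int_absorb2)
    moreover from \<open>card J = 1\<close> obtain i where "J = {i}"
      by (rule card_1_singletonE)
    ultimately show ?thesis
      using that(1) vertex_subset[OF I(1)] by blast
  qed (use e that(2) in blast)
qed

lemma JH_subset: "J \<in> JH V E \<Longrightarrow> J \<subseteq> {1..n}"
proof (elim JH_cases)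
  fix e assume "e \<in> E" "J \<in> Jfam e"
  then show "J \<subseteq> {1..n}"
    using edges vertex_subset unfolding hg_edges_def Jfam_def by blast
qed auto

lemma JH_nonempty: "J \<in> JH V E \<Longrightarrow> J \<noteq> {}"
proof (elim JH_cases)
  fix e assume "e \<in> E" "J \<in> Jfam e"
  moreover from \<open>e \<in> E\<close> obtain I where "I \<in> e"
    using edges unfolding hg_edges_def by fastforce
  ultimately have "card (J \<inter> I) = 1" unfolding Jfam_def by blast
  then show "J \<noteq> {}" by auto
qed auto

lemma finite_JH: "J \<in> JH V E \<Longrightarrow> finite J"
  using JH_subset finite_subset by blast

lemma JH_le_subset_JH: "JH_le n V E D \<subseteq> JH V E"
  unfolding JH_le_def by blast

lemma singleton_in_JH_of_mem: "J \<in> JH V E \<Longrightarrow> j \<in> J \<Longrightarrow> {j} \<in> JH V E"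
  using JH_subset singleton_in_JH by blast

lemma singleton_in_JH_le_of_mem: "J \<in> JH_le n V E D \<Longrightarrow> j \<in> J \<Longrightarrow> {j} \<in> JH_le n V E D"
  using singleton_in_JH_le unfolding JH_le_def by blast

lemma SH_eq_subset_indicators:
  "SH V E = subset_indicator (JH V E) ` transversals V"
proof (intro equalityI subsetI)
  fix w
  assume w: "w \<in> SH V E"
  define C where "C = {i. w {i} = 1}"
  have w_eq: "w = subset_indicator (JH V E) C"
    unfolding C_def using w JH_nonempty finite_JH singleton_in_JH_of_mem
    by (intro binary_multiplicative_eq_subset_indicator) (auto simp: SH_def)
  have "card (I \<inter> C) = 1" if "I \<in> V" for I
  proof -
    have "real (card (I \<inter> C)) = wsum w I"
      unfolding w_eq using that finite_vertex vertex_singleton_in_JH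
      by (subst wsum_subset_indicator) auto
    also have "\<dots> = 1" using w that unfolding SH_def by blast
    finally show ?thesis by simp
  qed
  with w_eq show "w \<in> subset_indicator (JH V E) ` transversals V"
    unfolding transversals_def by blast
next
  fix w
  assume "w \<in> subset_indicator (JH V E) ` transversals V"
  then obtain C where C: "\<forall>I\<in>V. card (I \<inter> C) = 1" and w: "w = subset_indicator (JH V E) C"
    unfolding transversals_def by blast
  have "wsum w I = 1" if "I \<in> V" for I
    unfolding w using that C finite_vertex vertex_singleton_in_JH
    by (subst wsum_subset_indicator) auto
  moreover have "w J = (\<Prod>j\<in>J. w {j})" if "J \<in> JH V E" for J
    unfolding w using that finite_JH singleton_in_JH_of_mem
    by (intro subset_indicator_multiplicative) auto
  moreover have "\<forall>J. J \<notin> JH V E \<longrightarrow> w J = 0" "\<forall>J\<in>JH V E. w J \<in> {0, 1}"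
    by (simp_all add: w subset_indicator_def)
  ultimately show "w \<in> SH V E"
    unfolding SH_def by blast
qed

lemma SH_le_eq_subset_indicators:
  "SH_le n V E D = subset_indicator (JH_le n V E D) ` partial_transversals ((\<lambda>I. I - D) ` V)"
proof (intro equalityI subsetI)
  fix v
  assume v: "v \<in> SH_le n V E D"
  define T where "T = {i. v {i} = 1}"
  have v_eq: "v = subset_indicator (JH_le n V E D) T"
    unfolding T_def using v JH_le_subset_JH JH_nonempty finite_JH singleton_in_JH_le_of_mem
    unfolding SH_le_def by (intro binary_multiplicative_eq_subset_indicator) blast+
  have "card ((I - D) \<inter> T) \<le> 1" if "I \<in> V" for I
  proof -
    have "real (card ((I - D) \<inter> T)) = wsum v (I - D)"
      unfolding v_eq using that finite_vertex vertex_singleton_in_JH_le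
      by (subst wsum_subset_indicator) auto
    also have "\<dots> \<le> 1" using v that unfolding SH_le_def by blast
    finally show ?thesis by simp
  qed
  with v_eq show "v \<in> subset_indicator (JH_le n V E D) ` partial_transversals ((\<lambda>I. I - D) ` V)"
    unfolding partial_transversals_def by blast
next
  fix v
  assume "v \<in> subset_indicator (JH_le n V E D) ` partial_transversals ((\<lambda>I. I - D) ` V)"
  then obtain T where T: "\<forall>I\<in>V. card ((I - D) \<inter> T) \<le> 1"
    and v: "v = subset_indicator (JH_le n V E D) T"
    unfolding partial_transversals_def by blast
  have "wsum v (I - D) \<le> 1" if "I \<in> V" for I
    unfolding v using that T finite_vertex vertex_singleton_in_JH_le
    by (subst wsum_subset_indicator) auto
  moreover have "v J = (\<Prod>j\<in>J. v {j})" if "J \<in> JH_le n V E D" for J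
    unfolding v using that finite_JH singleton_in_JH_le_of_mem
    using JH_le_subset_JH by (intro subset_indicator_multiplicative) blast+
  moreover have "\<forall>J. J \<notin> JH_le n V E D \<longrightarrow> v J = 0" "\<forall>J\<in>JH_le n V E D. v J \<in> {0, 1}"
    by (simp_all add: v subset_indicator_def)
  ultimately show "v \<in> SH_le n V E D"
    unfolding SH_le_def by blast
qed

lemma partial_transversal_extension:
  assumes d: "\<forall>I\<in>V. d I \<in> I" and T: "T \<in> partial_transversals ((\<lambda>I. I - d ` V) ` V)"
  obtains C where "C \<in> transversals V" "C - d ` V = T - d ` V"
proof
  define M where "M = {I\<in>V. (I - d ` V) \<inter> T = {}}"
  define C where "C = (T - d ` V) \<union> d ` M"
  show "C - d ` V = T - d ` V"
    unfolding C_def M_def by blast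
  show "C \<in> transversals V"
    unfolding transversals_def
  proof (intro CollectI ballI)
    fix I
    assume I: "I \<in> V"
    have "I' = I" if "I' \<in> M" "d I' \<in> I" for I'
      using vertex_eqI[OF _ I] d that unfolding M_def by blast
    then have "I \<inter> d ` M = (if I \<in> M then {d I} else {})"
      using d I by auto
    moreover have "I \<inter> C = ((I - d ` V) \<inter> T) \<union> (I \<inter> d ` M)"
      unfolding C_def by blast
    ultimately have I_C: "I \<inter> C = (if I \<in> M then {d I} else (I - d ` V) \<inter> T)"
      unfolding M_def by auto
    show "card (I \<inter> C) = 1"
    proof (cases "I \<in> M")
      case False
      then have "card ((I - d ` V) \<inter> T) \<noteq> 0"
        using finite_vertex[OF I] I unfolding M_def by auto
      moreover have "card ((I - d ` V) \<inter> T) \<le> 1"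
        using T I unfolding partial_transversals_def by blast
      ultimately show ?thesis
        using False unfolding I_C by simp
    qed (simp add: I_C)
  qed
qed

lemma proj_SH_eq:
  assumes d: "\<forall>I\<in>V. d I \<in> I"
  shows "proj (JH_le n V E (d ` V)) ` SH V E = SH_le n V E (d ` V)"
proof -
  let ?X = "JH_le n V E (d ` V)"
  let ?partial = "partial_transversals ((\<lambda>I. I - d ` V) ` V)"
  have "proj ?X ` SH V E = subset_indicator ?X ` transversals V"
    unfolding SH_eq_subset_indicators image_image
    by (simp add: proj_subset_indicator JH_le_subset_JH)
  also have "\<dots> = subset_indicator ?X ` ?partial"
  proof
    have "transversals V \<subseteq> ?partial"
      unfolding transversals_def partial_transversals_def
    proof (intro subsetI CollectI ballI, elim CollectE imageE)
      fix C I' I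
      assume "\<forall>I\<in>V. card (I \<inter> C) = 1" "I \<in> V" "I' = I - d ` V"
      moreover have "card ((I - d ` V) \<inter> C) \<le> card (I \<inter> C)"
        using finite_vertex[OF \<open>I \<in> V\<close>] by (intro card_mono) auto
      ultimately show "card (I' \<inter> C) \<le> 1"
        by simp
    qed
    then show "subset_indicator ?X ` transversals V \<subseteq> subset_indicator ?X ` ?partial"
      by (rule image_mono)
  next
    show "subset_indicator ?X ` ?partial \<subseteq> subset_indicator ?X ` transversals V"
    proof
      fix v
      assume "v \<in> subset_indicator ?X ` ?partial"
      then obtain T where T: "T \<in> ?partial" and v: "v = subset_indicator ?X T"
        by blast
      obtain C where C: "C \<in> transversals V" "C - d ` V = T - d ` V"
        using partial_transversal_extension[OF d T] .
      have "v = subset_indicator ?X C"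
        using C(2) unfolding v subset_indicator_def JH_le_def by (auto simp: fun_eq_iff)
      with C(1) show "v \<in> subset_indicator ?X ` transversals V"
        by blast
    qed
  qed
  also have "\<dots> = SH_le n V E (d ` V)"
    unfolding SH_le_eq_subset_indicators ..
  finally show ?thesis .
qed

lemma Jfam_vertex_mem:
  assumes "e \<subseteq> V" "J \<in> Jfam e" "I \<in> V" "i \<in> J" "i \<in> I"
  shows "I \<in> e"
proof -
  obtain I' where "I' \<in> e" "i \<in> I'"
    using assms(2,4) unfolding Jfam_def by blast
  with assms(1,3,5) vertex_eqI show ?thesis by blast
qed

lemma Jfam_remove_vertex:
  assumes e: "e \<subseteq> V" "I \<in> e" and J: "J \<in> Jfam e" and i: "i \<in> J" "i \<in> I"
  shows "J - {i} \<in> Jfam (e - {I})" and "i' \<in> I \<Longrightarrow> insert i' (J - {i}) \<in> Jfam e"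
proof -
  have "card (J \<inter> I) = 1"
    using J e(2) unfolding Jfam_def by blast
  with i have J_I: "J \<inter> I = {i}"
    by (metis IntI card_1_singletonE singletonD)
  have other: "(J - {i}) \<inter> I' = J \<inter> I'" "i' \<notin> I'" if "I' \<in> e" "I' \<noteq> I" "i' \<in> I" for I' i'
    using vertex_eqI[of I I'] e that i by auto
  show "J - {i} \<in> Jfam (e - {I})"
    using J J_I other i(2) unfolding Jfam_def by fastforce
  assume i': "i' \<in> I"
  have "card (insert i' (J - {i}) \<inter> I') = 1" if "I' \<in> e" for I'
  proof (cases "I' = I")
    case True
    with i' J_I have "insert i' (J - {i}) \<inter> I' = {i'}"
      by blast
    then show ?thesis by simp
  next
    case False
    then have "insert i' (J - {i}) \<inter> I' = J \<inter> I'"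
      using other[OF that False i'] by blast
    with J that show ?thesis
      unfolding Jfam_def by simp
  qed
  moreover have "insert i' (J - {i}) \<subseteq> \<Union>e"
    using J e(2) i' unfolding Jfam_def by blast
  ultimately show "insert i' (J - {i}) \<in> Jfam e"
    unfolding Jfam_def by blast
qed

lemma JH_remove_element:
  assumes closed: "downward_closed E" and J: "J \<in> JH V E" and I: "I \<in> V"
    and i: "i \<in> I" "i \<in> J" and not_singleton: "J \<noteq> {i}"
  shows "J - {i} \<in> JH V E" and "i' \<in> I \<Longrightarrow> insert i' (J - {i}) \<in> JH V E"
proof -
  obtain e where e: "e \<in> E" "J \<in> Jfam e"
    using J not_singleton i(2) by (cases rule: JH_cases) auto
  have "e \<subseteq> V" "2 \<le> card e"
    using edges e(1) unfolding hg_edges_def by auto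
  moreover have "I \<in> e"
    using Jfam_vertex_mem \<open>e \<subseteq> V\<close> e(2) I i by blast
  ultimately have "1 \<le> card (e - {I})"
    by (simp add: card_Diff_singleton_if)
  have "e - {I} \<in> LV V \<union> E"
  proof (cases "card (e - {I}) = 1")
    case True
    then obtain I' where "e - {I} = {I'}"
      by (rule card_1_singletonE)
    with \<open>e \<subseteq> V\<close> show ?thesis
      unfolding LV_def by blast
  next
    case False
    with \<open>1 \<le> card (e - {I})\<close> closed e(1) show ?thesis
      unfolding downward_closed_def by auto
  qed
  with Jfam_remove_vertex(1)[OF \<open>e \<subseteq> V\<close> \<open>I \<in> e\<close> e(2) i(2,1)]
  show "J - {i} \<in> JH V E"
    unfolding JH_def by blast
  assume "i' \<in> I"
  with Jfam_remove_vertex(2)[OF \<open>e \<subseteq> V\<close> \<open>I \<in> e\<close> e(2) i(2,1)] e(1)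
  show "insert i' (J - {i}) \<in> JH V E"
    unfolding JH_def by blast
qed

lemma MC_outside_JH:
  assumes "x \<in> MC V E" "J \<notin> JH V E"
  shows "x J = 0"
proof -
  have "(\<Sum>k\<in>{J}. x (id k)) = (\<Sum>k\<in>{}. x (id k)) + 0"
    using assms(1) unfolding MC_def
    by (rule conv_hull_sum_eq) (use assms(2) in \<open>simp add: SH_def\<close>)
  then show ?thesis by simp
qed

lemma MC_sum_singletons:
  assumes "x \<in> MC V E" "I \<in> V"
  shows "(\<Sum>i\<in>I. x {i}) = 1"
proof -
  have "(\<Sum>i\<in>I. x {i}) = (\<Sum>k\<in>{}. x (id k)) + 1"
    using assms(1) unfolding MC_def
    by (rule conv_hull_sum_eq) (use assms(2) in \<open>simp add: SH_def wsum_def\<close>)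
  then show ?thesis by simp
qed

lemma SH_sum_insert:
  assumes w: "w \<in> SH V E" and J: "J \<in> JH V E" and I: "I \<in> V"
    and insert_JH: "\<And>i. i \<in> I \<Longrightarrow> insert i J \<in> JH V E"
  shows "(\<Sum>i\<in>I. w (insert i J)) = w J"
proof -
  obtain C where C: "card (I \<inter> C) = 1" and w_eq: "w = subset_indicator (JH V E) C"
    using w I unfolding SH_eq_subset_indicators transversals_def by blast
  have "(\<Sum>i\<in>I. w (insert i J)) = (\<Sum>i\<in>I. if i \<in> C then w J else 0)"
    using J insert_JH by (intro sum.cong) (auto simp: w_eq subset_indicator_def)
  also have "\<dots> = card (I \<inter> C) * w J"
    using finite_vertex[OF I] by (simp add: sum.If_cases Int_def)
  finally show ?thesis
    using C by simp
qed

lemma MC_sum_insert: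
  assumes "x \<in> MC V E" "J \<in> JH V E" "I \<in> V" "\<And>i. i \<in> I \<Longrightarrow> insert i J \<in> JH V E"
  shows "(\<Sum>i\<in>I. x (insert i J)) = x J"
proof -
  have "(\<Sum>i\<in>I. x (insert i J)) = (\<Sum>k\<in>{J}. x (id k)) + 0"
    using assms(1) unfolding MC_def
    by (rule conv_hull_sum_eq) (use SH_sum_insert assms(2-4) in simp)
  then show ?thesis by simp
qed

lemma MC_coordinate_recursion:
  assumes closed: "downward_closed E" and x: "x \<in> MC V E" and J: "J \<in> JH V E"
    and I: "I \<in> V" and i: "i \<in> I" "i \<in> J"
  shows "x J = (if J = {i} then 1 else x (J - {i})) - (\<Sum>i'\<in>I - {i}. x (insert i' (J - {i})))"
proof (cases "J = {i}")
  case True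
  with MC_sum_singletons[OF x I] sum.remove[OF finite_vertex[OF I] i(1), of "\<lambda>i. x {i}"]
  show ?thesis
    by simp
next
  case False
  have "(\<Sum>i'\<in>I. x (insert i' (J - {i}))) = x (J - {i})"
    using JH_remove_element[OF closed J I i False] by (intro MC_sum_insert[OF x _ I]) auto
  moreover have "insert i (J - {i}) = J"
    using i(2) by blast
  ultimately show ?thesis
    using False sum.remove[OF finite_vertex[OF I] i(1), of "\<lambda>i'. x (insert i' (J - {i}))"] by simp
qed

lemma inj_on_proj_MC:
  assumes closed: "downward_closed E" and D: "D \<in> partial_transversals V"
  shows "inj_on (proj (JH_le n V E D)) (MC V E)"
proof (rule inj_onI, rule ext)
  fix x y J
  assume x: "x \<in> MC V E" and y: "y \<in> MC V E"
    and proj_eq: "proj (JH_le n V E D) x = proj (JH_le n V E D) y"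
  show "x J = y J"
  proof (induction "card (J \<inter> D)" arbitrary: J rule: less_induct)
    case less
    show ?case
    proof (cases "J \<in> JH V E")
      case False
      with MC_outside_JH[OF x] MC_outside_JH[OF y] show ?thesis by simp
    next
      case J: True
      show ?thesis
      proof (cases "J \<inter> D = {}")
        case True
        with J JH_subset have "J \<in> JH_le n V E D"
          unfolding JH_le_def by blast
        with fun_cong[OF proj_eq, of J] show ?thesis
          unfolding proj_def by simp
      next
        case False
        then obtain i where i: "i \<in> J" "i \<in> D"
          by blast
        then obtain I where I: "I \<in> V" "i \<in> I"
          using vertex_cover JH_subset J by blast
        have "finite (I \<inter> D)" "card (I \<inter> D) \<le> 1"
          using D I(1) finite_vertex[OF I(1)] unfolding partial_transversals_def by auto
        then have "I \<inter> D = {i}"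
          using I(2) i(2) by (auto simp: card_le_Suc0_iff_eq)
        have fewer: "card (K \<inter> D) < card (J \<inter> D)" if "K \<inter> D \<subseteq> J \<inter> D - {i}" for K
        proof -
          have "card (K \<inter> D) \<le> card (J \<inter> D - {i})"
            using that finite_JH[OF J] by (intro card_mono) auto
          also have "\<dots> < card (J \<inter> D)"
            using i finite_JH[OF J] by (intro card_Diff1_less) auto
          finally show ?thesis .
        qed
        have "x (insert i' (J - {i})) = y (insert i' (J - {i}))" if "i' \<in> I - {i}" for i'
          using that \<open>I \<inter> D = {i}\<close> by (intro less fewer) blast
        then have "(\<Sum>i'\<in>I - {i}. x (insert i' (J - {i}))) = (\<Sum>i'\<in>I - {i}. y (insert i' (J - {i})))"
          by (rule sum.cong[OF refl])
        moreover have "x (J - {i}) = y (J - {i})"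
          by (rule less, rule fewer) blast
        ultimately show ?thesis
          using MC_coordinate_recursion[OF closed x J I i(1)] MC_coordinate_recursion[OF closed y J I i(1)]
          by simp
      qed
    qed
  qed
qed

end

theorem proposition3p4:
  fixes n :: nat and V :: "nat set set" and E :: "nat set set set" and d :: "nat set \<Rightarrow> nat"
  assumes "n > 0"
    and "hg_vertices_partition n V"
    and "hg_edges V E"
    and "downward_closed E"
    and "\<forall>I\<in>V. d I \<in> I"
  shows "bij_betw (proj (JH_le n V E (d ` V))) (MC V E) (MC_le n V E (d ` V))"
proof -
  interpret partitioned_hypergraph n V E
    using assms(2,3) by unfold_locales
  have "inj_on (proj (JH_le n V E (d ` V))) (MC V E)"
    using assms(4) representatives_partial_transversal[OF assms(5)] by (rule inj_on_proj_MC)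
  moreover have "proj (JH_le n V E (d ` V)) ` MC V E = MC_le n V E (d ` V)"
    unfolding MC_def MC_le_def proj_conv_hull proj_SH_eq[OF assms(5)] ..
  ultimately show ?thesis
    unfolding bij_betw_def ..
qed

end
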